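(* Let $\{f(\mathbf z;\boldsymbol\theta):\boldsymbol\theta\in\Theta\}$, $\Theta\subset\mathbb{R}^p$, be a family of probability mass or density functions on a sample space $\mathcal Z\subset\mathbb{R}^q$, and let $\mathbf z_1,\dots,\mathbf z_n$ be an i.i.d. sample from $f(\cdot;\boldsymbol\theta_0)$. For each $r\in\mathbb N$ let $\tilde f_r(\mathbf z;\boldsymbol\theta)$ be an approximation of $f(\mathbf z;\boldsymbol\theta)$ (the same approximation for all observations), let $R:\mathbb N\to\mathbb N$, and define $\tilde L_n(\boldsymbol\theta)=\frac1n\sum_{i=1}^n\log\tilde f_{R(n)}(\mathbf z_i;\boldsymbol\theta)$ and $\hat{\boldsymbol\theta}_{MAL}=\arg\max_{\boldsymbol\theta\in\Theta}\tilde L_n(\boldsymbol\theta)$. Assume: (i) for all $\boldsymbol\theta\neq\boldsymbol\theta_0$, $f(\cdot;\boldsymbol\theta)\neq f(\cdot;\boldsymbol\theta_0)$; $\boldsymbol\theta_0\in\Theta$ and $\Theta$ is compact; $\log f(\mathbf z;\boldsymbol\theta)$ is continuous at each $\boldsymbol\theta\in\Theta$ with probability one; and $\mathbb E_{\mathbf z}[\sup_{\boldsymbol\theta\in\Theta}|\log f(\mathbf z;\boldsymbol\theta)|]<\infty$; (ii) there exists $\bar\delta>0$ such that $f(\mathbf z;\boldsymbol\theta)\ge\bar\delta$ for all $\mathbf z\in\mathcal Z$, $\boldsymbol\theta\in\Theta$; (iii) $\lim_{r\to\infty}\sup_{\mathbf z\in\mathcal Z,\boldsymbol\theta\in\Theta}|\tilde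 f_r(\mathbf z;\boldsymbol\theta)-f(\mathbf z;\boldsymbol\theta)|=0$; (iv) $R(n)$ is monotonically increasing in $n$ and $\lim_{n\to\infty}R(n)=\infty$. Then $\hat{\boldsymbol\theta}_{MAL}\to\boldsymbol\theta_0$ in probability. *)

theory Defs
  imports "HOL-Probability.Probability"
begin

definition L_tilde ::
  "(nat \<Rightarrow> 'z \<Rightarrow> 't \<Rightarrow> real) \<Rightarrow> (nat \<Rightarrow> nat) \<Rightarrow> (nat \<Rightarrow> 'a \<Rightarrow> 'z) \<Rightarrow> nat \<Rightarrow> 'a \<Rightarrow> 't \<Rightarrow> real"
  where "L_tilde ftil R Z n \<omega> \<theta> = (1 / real n) * (\<Sum>i<n. ln (ftil (R n) (Z i \<omega>) \<theta>))"

end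

theory Submission
  imports Defs
begin

text \<open>Wald's consistency argument, with the approximation error controlled uniformly.
  For \<open>\<theta>1 \<noteq> \<theta>0\<close> the expected log-likelihood of \<open>\<theta>1\<close> under the true law is strictly smaller
  than that of \<open>\<theta>0\<close> (Gibbs' inequality together with identifiability). By continuity and dominated
  convergence the same holds for the supremum of the log-density over a small ball around \<open>\<theta>1\<close>,
  so by compactness the parameters at distance at least \<open>\<epsilon>\<close> from \<open>\<theta>0\<close> are covered by finitely
  many balls on each of which the expected local supremum falls short of the expected
  log-likelihood of \<open>\<theta>0\<close> by some \<open>\<gamma> > 0\<close>. By the weak law of large numbers (truncation plus
  Hoeffding's inequality), the empirical average of the local supremum minus the log-likelihood of
  \<open>\<theta>0\<close> reaches \<open>-\<gamma>/2\<close> only with vanishing probability. On the other hand, since \<open>f \<ge> \<delta> > 0\<close>, uniform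
  convergence of the approximations turns into uniform convergence of the log-densities, so for
  large \<open>n\<close> the approximate log-likelihood is within \<open>\<gamma>/4\<close> of the exact one, and a maximiser in
  one of the balls would force that average to be at least \<open>-\<gamma>/2\<close>.\<close>

lemma abs_ln_diff_le:
  fixes a b m :: real
  assumes "0 < m" "m \<le> a" "m \<le> b"
  shows "\<bar>ln a - ln b\<bar> \<le> \<bar>a - b\<bar> / m"
proof -
  have one_sided: "ln x - ln y \<le> \<bar>x - y\<bar> / m" if "m \<le> x" "m \<le> y" for x y :: real
  proof -
    have "ln x - ln y = ln (x / y)" using that \<open>0 < m\<close> by (simp add: ln_div)
    also have "\<dots> \<le> x / y - 1" using that \<open>0 < m\<close> by (intro ln_le_minus_one) auto
    also have "\<dots> = (x - y) / y" using that \<open>0 < m\<close> by (simp add: field_simps)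
    also have "\<dots> \<le> \<bar>x - y\<bar> / y" using that \<open>0 < m\<close> by (intro divide_right_mono) auto
    also have "\<dots> \<le> \<bar>x - y\<bar> / m" using that \<open>0 < m\<close> by (intro divide_left_mono) auto
    finally show ?thesis .
  qed
  show ?thesis using one_sided[of a b] one_sided[of b a] assms by (auto simp: abs_minus_commute)
qed

lemma continuous_on_le_from_dense:
  fixes h :: "'b::metric_space \<Rightarrow> real"
  assumes h: "continuous_on S h" and "C \<subseteq> S" "S \<subseteq> closure C" "open U"
    and x: "x \<in> S" "x \<in> U" and le: "\<And>c. c \<in> C \<Longrightarrow> c \<in> U \<Longrightarrow> h c \<le> b"
  shows "h x \<le> b"
proof -
  have "x \<in> closure (U \<inter> C)" using open_Int_closure_subset[OF \<open>open U\<close>, of C] assms by auto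
  then obtain s where s: "\<And>n. s n \<in> U \<inter> C" "s \<longlonglongrightarrow> x" unfolding closure_sequential by blast
  have "(\<lambda>n. h (s n)) \<longlonglongrightarrow> h x"
    by (rule continuous_on_tendsto_compose[OF h s(2) x(1)])
      (use s(1) \<open>C \<subseteq> S\<close> in \<open>auto intro!: always_eventually\<close>)
  then show ?thesis by (rule LIMSEQ_le_const2) (use s(1) le in auto)
qed

lemma density_ratio_integrable_integral:
  fixes p q :: "'b \<Rightarrow> real"
  assumes [measurable]: "p \<in> borel_measurable \<mu>" "q \<in> borel_measurable \<mu>"
    and p_pos: "\<And>z. z \<in> space \<mu> \<Longrightarrow> 0 < p z" and q_nonneg: "\<And>z. z \<in> space \<mu> \<Longrightarrow> 0 \<le> q z"
    and q_one: "(\<integral>\<^sup>+ z. ennreal (q z) \<partial>\<mu>) = 1"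
  shows "integrable (density \<mu> (\<lambda>z. ennreal (p z))) (\<lambda>z. q z / p z)"
    and "(\<integral>z. q z / p z \<partial>density \<mu> (\<lambda>z. ennreal (p z))) = 1"
proof -
  have p_nonneg: "AE z in \<mu>. 0 \<le> p z" using p_pos by (auto intro!: AE_I2 less_imp_le)
  have "integrable \<mu> q"
    by (rule integrableI_nonneg) (use q_one q_nonneg in \<open>auto intro!: AE_I2\<close>)
  moreover have "integrable \<mu> (\<lambda>z. p z *\<^sub>R (q z / p z)) \<longleftrightarrow> integrable \<mu> q"
    by (rule Bochner_Integration.integrable_cong) (auto dest: p_pos)
  moreover have "integrable (density \<mu> (\<lambda>z. ennreal (p z))) (\<lambda>z. q z / p z)
      \<longleftrightarrow> integrable \<mu> (\<lambda>z. p z *\<^sub>R (q z / p z))"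
    by (rule integrable_density) (use p_nonneg in auto)
  ultimately show "integrable (density \<mu> (\<lambda>z. ennreal (p z))) (\<lambda>z. q z / p z)" by blast
  have "(\<integral>z. q z / p z \<partial>density \<mu> (\<lambda>z. ennreal (p z))) = (\<integral>z. p z *\<^sub>R (q z / p z) \<partial>\<mu>)"
    by (rule integral_density) (use p_nonneg in auto)
  also have "\<dots> = (\<integral>z. q z \<partial>\<mu>)" by (rule Bochner_Integration.integral_cong) (auto dest: p_pos)
  also have "\<dots> = 1"
    using q_one q_nonneg by (subst integral_eq_nn_integral) (auto intro!: AE_I2)
  finally show "(\<integral>z. q z / p z \<partial>density \<mu> (\<lambda>z. ennreal (p z))) = 1" .
qed

lemma Gibbs_inequality_strict:
  fixes p q :: "'b \<Rightarrow> real"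
  assumes [measurable]: "p \<in> borel_measurable \<mu>" "q \<in> borel_measurable \<mu>"
    and p_pos: "\<And>z. z \<in> space \<mu> \<Longrightarrow> 0 < p z" and q_pos: "\<And>z. z \<in> space \<mu> \<Longrightarrow> 0 < q z"
    and p_one: "(\<integral>\<^sup>+ z. ennreal (p z) \<partial>\<mu>) = 1" and q_one: "(\<integral>\<^sup>+ z. ennreal (q z) \<partial>\<mu>) = 1"
    and int_p: "integrable (density \<mu> (\<lambda>z. ennreal (p z))) (\<lambda>z. ln (p z))"
    and int_q: "integrable (density \<mu> (\<lambda>z. ennreal (p z))) (\<lambda>z. ln (q z))"
    and differ: "\<not> (AE z in \<mu>. q z = p z)"
  shows "(\<integral>z. ln (q z) \<partial>density \<mu> (\<lambda>z. ennreal (p z)))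
       < (\<integral>z. ln (p z) \<partial>density \<mu> (\<lambda>z. ennreal (p z)))"
proof -
  define P where "P = density \<mu> (\<lambda>z. ennreal (p z))"
  interpret P: prob_space P
    unfolding P_def by (rule prob_spaceI) (simp add: emeasure_density p_one)
  have int_ln: "integrable P (\<lambda>z. ln (p z))" "integrable P (\<lambda>z. ln (q z))"
    using int_p int_q unfolding P_def .
  define r where "r z = q z / p z" for z
  have int_r: "integrable P r" and integral_r: "(\<integral>z. r z \<partial>P) = 1"
    using density_ratio_integrable_integral[where p=p and q=q and \<mu>=\<mu>] p_pos q_pos q_one unfolding P_def r_def
    by (auto simp: less_imp_le)
  \<comment> \<open>the Kullback-Leibler integrand \<open>ln p - ln q\<close> plus \<open>r - 1\<close>, which integrates to \<open>0\<close> and makes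
    it pointwise nonnegative since \<open>ln x \<le> x - 1\<close>\<close>
  define h where "h z = r z - 1 - (ln (q z) - ln (p z))" for z
  have h_r: "h z = r z - 1 - ln (r z)" and r_pos: "0 < r z" if "z \<in> space \<mu>" for z
    using p_pos[OF that] q_pos[OF that] by (simp_all add: h_def r_def ln_div)
  have h_nonneg: "AE z in P. 0 \<le> h z"
    by (rule AE_I2) (use h_r r_pos ln_le_minus_one in \<open>fastforce simp: P_def\<close>)
  have int_h: "integrable P h" unfolding h_def using int_r int_ln by auto
  have integral_h: "(\<integral>z. h z \<partial>P) = (\<integral>z. ln (p z) \<partial>P) - (\<integral>z. ln (q z) \<partial>P)"
    unfolding h_def using int_r int_ln integral_r P.prob_space by simp
  have "(\<integral>z. h z \<partial>P) \<noteq> 0"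
  proof
    assume "(\<integral>z. h z \<partial>P) = 0"
    then have "AE z in P. h z = 0" using integral_nonneg_eq_0_iff_AE[OF int_h h_nonneg] by simp
    then have "AE z in \<mu>. 0 < ennreal (p z) \<longrightarrow> h z = 0"
      unfolding P_def by (subst (asm) AE_density) auto
    then have "AE z in \<mu>. q z = p z"
    proof (rule AE_mp, intro AE_I2 impI)
      fix z assume z: "z \<in> space \<mu>" and "0 < ennreal (p z) \<longrightarrow> h z = 0"
      then have "ln (r z) = r z - 1" using h_r p_pos by simp
      then have "r z = 1" using ln_eq_minus_one r_pos z by blast
      then show "q z = p z" using p_pos[OF z] by (simp add: r_def)
    qed
    with differ show False ..
  qed
  moreover have "0 \<le> (\<integral>z. h z \<partial>P)" using h_nonneg by (rule integral_nonneg_AE)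
  ultimately show ?thesis unfolding P_def[symmetric] using integral_h by linarith
qed

lemma distr_eq_integrable_comp_iff:
  fixes g :: "'b \<Rightarrow> real"
  assumes "X \<in> measurable M N" "X' \<in> measurable M N" "distr M N X = distr M N X'"
    and "g \<in> borel_measurable N"
  shows "integrable M (\<lambda>\<omega>. g (X \<omega>)) \<longleftrightarrow> integrable M (\<lambda>\<omega>. g (X' \<omega>))"
  using integrable_distr_eq[of X M N g] integrable_distr_eq[of X' M N g] assms by simp

lemma distr_eq_integral_comp:
  fixes g :: "'b \<Rightarrow> real"
  assumes "X \<in> measurable M N" "X' \<in> measurable M N" "distr M N X = distr M N X'"
    and "g \<in> borel_measurable N"
  shows "(\<integral>\<omega>. g (X \<omega>) \<partial>M) = (\<integral>\<omega>. g (X' \<omega>) \<partial>M)"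
  using integral_distr[of X M N g] integral_distr[of X' M N g] assms by simp

lemma truncation_error_tendsto_0:
  fixes X :: "'a \<Rightarrow> real"
  assumes "integrable M X"
  shows "(\<lambda>k. \<integral>\<omega>. \<bar>X \<omega> - max (- real k) (min (real k) (X \<omega>))\<bar> \<partial>M) \<longlonglongrightarrow> 0"
proof -
  have [measurable]: "X \<in> borel_measurable M" using assms by simp
  have "(\<lambda>k. \<integral>\<omega>. \<bar>X \<omega> - max (- real k) (min (real k) (X \<omega>))\<bar> \<partial>M) \<longlonglongrightarrow> (\<integral>\<omega>. 0 \<partial>M)"
  proof (rule integral_dominated_convergence[where w="\<lambda>\<omega>. \<bar>X \<omega>\<bar>"])
    show "AE \<omega> in M. (\<lambda>k. \<bar>X \<omega> - max (- real k) (min (real k) (X \<omega>))\<bar>) \<longlonglongrightarrow> 0"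
    proof (rule AE_I2, rule tendsto_eventually)
      fix \<omega>
      obtain k0 :: nat where "\<bar>X \<omega>\<bar> \<le> real k0" using real_arch_simple by blast
      then show "\<forall>\<^sub>F k in sequentially. \<bar>X \<omega> - max (- real k) (min (real k) (X \<omega>))\<bar> = 0"
        unfolding eventually_sequentially by (intro exI[of _ k0]) auto
    qed
  qed (use assms in auto)
  then show ?thesis by simp
qed

lemma mean_le_mean_plus_mean_abs_diff:
  fixes x y :: "nat \<Rightarrow> real"
  shows "(\<Sum>i<n. x i) / n \<le> (\<Sum>i<n. y i) / n + (\<Sum>i<n. \<bar>x i - y i\<bar>) / n"
proof -
  have "(\<Sum>i<n. x i) \<le> (\<Sum>i<n. y i) + (\<Sum>i<n. \<bar>x i - y i\<bar>)"
    by (simp add: sum.distrib[symmetric] sum_mono)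
  then show ?thesis by (simp add: add_divide_distrib[symmetric] divide_right_mono)
qed

context prob_space
begin

lemma Hoeffding_iid_mean_ge:
  fixes Z :: "nat \<Rightarrow> 'a \<Rightarrow> 'b" and h :: "'b \<Rightarrow> real"
  assumes Z_meas: "\<And>i. Z i \<in> measurable M N" and indep: "indep_vars (\<lambda>_. N) Z UNIV"
    and same: "\<And>i. distr M N (Z i) = distr M N (Z 0)"
    and h: "h \<in> borel_measurable N" and h_bounded: "\<And>x. x \<in> space N \<Longrightarrow> h x \<in> {a..b}"
    and "a < b" "0 \<le> \<epsilon>" "0 < n"
  shows "prob {\<omega> \<in> space M. expectation (\<lambda>\<omega>. h (Z 0 \<omega>)) + \<epsilon> \<le> (\<Sum>i<n. h (Z i \<omega>)) / n}
     \<le> exp (- 2 * real n * \<epsilon>\<^sup>2 / (b - a)\<^sup>2)"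
proof -
  interpret H: Hoeffding_ineq_iid M "{..<n}" "\<lambda>i \<omega>. h (Z i \<omega>)" "\<lambda>\<omega>. h (Z 0 \<omega>)" a b
    "expectation (\<lambda>\<omega>. h (Z 0 \<omega>))"
  proof unfold_locales
    show "indep_vars (\<lambda>_. borel) (\<lambda>i \<omega>. h (Z i \<omega>)) {..<n}"
      by (rule indep_vars_compose2[OF indep_vars_subset[OF indep]]) (auto simp: h)
    fix i
    have "distr M borel (\<lambda>\<omega>. h (Z i \<omega>)) = distr (distr M N (Z i)) borel h"
      using Z_meas h by (subst distr_distr) (auto simp: comp_def)
    also have "\<dots> = distr (distr M N (Z 0)) borel h" by (simp only: same[of i])
    also have "\<dots> = distr M borel (\<lambda>\<omega>. h (Z 0 \<omega>))"
      using Z_meas h by (subst distr_distr) (auto simp: comp_def)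
    finally show "distr M borel (\<lambda>\<omega>. h (Z i \<omega>)) = distr M borel (\<lambda>\<omega>. h (Z 0 \<omega>))" .
  next
    show "random_variable borel (\<lambda>\<omega>. h (Z 0 \<omega>))" using Z_meas h by measurable
    show "AE \<omega> in M. h (Z 0 \<omega>) \<in> {a..b}"
      by (rule AE_I2) (rule h_bounded[OF measurable_space[OF Z_meas]])
  qed (rule finite_lessThan)
  \<comment> \<open>\<open>0 < n\<close> must stay out of the simplifier: the interpretation adds the rewrite rule
    \<open>i \<in> {..<n} \<Longrightarrow> expectation (\<lambda>\<omega>. h (Z i \<omega>)) = expectation (\<lambda>\<omega>. h (Z 0 \<omega>))\<close>, which loops for \<open>i = 0\<close>.\<close>
  have "{..<n} \<noteq> {}" using \<open>0 < n\<close> by auto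
  from H.Hoeffding_ineq_ge'[OF \<open>0 \<le> \<epsilon>\<close> \<open>a < b\<close> this] show ?thesis by simp
qed

lemma Markov_iid_mean_ge:
  fixes Z :: "nat \<Rightarrow> 'a \<Rightarrow> 'b" and h :: "'b \<Rightarrow> real"
  assumes Z_meas: "\<And>i. Z i \<in> measurable M N" and same: "\<And>i. distr M N (Z i) = distr M N (Z 0)"
    and h [measurable]: "h \<in> borel_measurable N" and h_nonneg: "\<And>x. x \<in> space N \<Longrightarrow> 0 \<le> h x"
    and int: "integrable M (\<lambda>\<omega>. h (Z 0 \<omega>))" and "0 < c" "0 < n"
  shows "prob {\<omega> \<in> space M. c \<le> (\<Sum>i<n. h (Z i \<omega>)) / n} \<le> expectation (\<lambda>\<omega>. h (Z 0 \<omega>)) / c"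
proof -
  have int_i: "integrable M (\<lambda>\<omega>. h (Z i \<omega>))" for i
    using int by (rule distr_eq_integrable_comp_iff[OF Z_meas Z_meas same h, THEN iffD2])
  have "expectation (\<lambda>\<omega>. (\<Sum>i<n. h (Z i \<omega>)) / n) = (\<Sum>i<n. expectation (\<lambda>\<omega>. h (Z i \<omega>))) / n"
    using int_i by simp
  also have "\<dots> = (\<Sum>i<n. expectation (\<lambda>\<omega>. h (Z 0 \<omega>))) / n"
    by (rule arg_cong[where f="\<lambda>x. x / n"], rule sum.cong[OF refl])
      (rule distr_eq_integral_comp[OF Z_meas Z_meas same h])
  also have "\<dots> = expectation (\<lambda>\<omega>. h (Z 0 \<omega>))" using \<open>0 < n\<close> by simp
  finally have mean: "expectation (\<lambda>\<omega>. (\<Sum>i<n. h (Z i \<omega>)) / n) = expectation (\<lambda>\<omega>. h (Z 0 \<omega>))" .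
  have "prob {\<omega> \<in> space M. c \<le> (\<Sum>i<n. h (Z i \<omega>)) / n} \<le> expectation (\<lambda>\<omega>. (\<Sum>i<n. h (Z i \<omega>)) / n) / c"
    by (rule integral_Markov_inequality_measure[where A="space M"])
      (use int_i h_nonneg measurable_space[OF Z_meas] \<open>0 < c\<close> in \<open>auto intro!: AE_I2 divide_nonneg_nonneg sum_nonneg\<close>)
  then show ?thesis unfolding mean .
qed

lemma prob_iid_mean_ge_truncation_bound:
  fixes Z :: "nat \<Rightarrow> 'a \<Rightarrow> 'b" and g :: "'b \<Rightarrow> real" and K :: nat
  assumes Z_meas: "\<And>i. Z i \<in> measurable M N" and indep: "indep_vars (\<lambda>_. N) Z UNIV"
    and same: "\<And>i. distr M N (Z i) = distr M N (Z 0)"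
    and g [measurable]: "g \<in> borel_measurable N" and int: "integrable M (\<lambda>\<omega>. g (Z 0 \<omega>))"
    and "0 < c" "0 < K" "0 < n"
  defines "trunc x \<equiv> max (- real K) (min (real K) (g x))"
  assumes small: "expectation (\<lambda>\<omega>. \<bar>g (Z 0 \<omega>) - trunc (Z 0 \<omega>)\<bar>) < c/4"
  shows "prob {\<omega> \<in> space M. expectation (\<lambda>\<omega>. g (Z 0 \<omega>)) + c \<le> (\<Sum>i<n. g (Z i \<omega>)) / n}
    \<le> exp (- 2 * real n * (c/2)\<^sup>2 / (real K - - real K)\<^sup>2)
      + expectation (\<lambda>\<omega>. \<bar>g (Z 0 \<omega>) - trunc (Z 0 \<omega>)\<bar>) / (c/4)"
proof -
  define err where "err x = \<bar>g x - trunc x\<bar>" for x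
  have [measurable]: "trunc \<in> borel_measurable N" "err \<in> borel_measurable N"
    unfolding trunc_def err_def by measurable
  have int_trunc: "integrable M (\<lambda>\<omega>. trunc (Z 0 \<omega>))"
    by (rule integrable_const_bound[where B="real K"]) (use Z_meas in \<open>auto simp: trunc_def\<close>)
  let ?m = "expectation (\<lambda>\<omega>. g (Z 0 \<omega>))" and ?mK = "expectation (\<lambda>\<omega>. trunc (Z 0 \<omega>))"
  have "?m - ?mK = expectation (\<lambda>\<omega>. g (Z 0 \<omega>) - trunc (Z 0 \<omega>))"
    using int int_trunc by simp
  also have "\<dots> \<ge> - expectation (\<lambda>\<omega>. err (Z 0 \<omega>))"
    using integral_abs_bound[of M "\<lambda>\<omega>. g (Z 0 \<omega>) - trunc (Z 0 \<omega>)"] by (simp add: err_def abs_le_iff)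
  finally have m_ge: "?mK - expectation (\<lambda>\<omega>. err (Z 0 \<omega>)) \<le> ?m" by simp
  define A where "A = {\<omega> \<in> space M. ?mK + c/2 \<le> (\<Sum>i<n. trunc (Z i \<omega>)) / n}"
  define B where "B = {\<omega> \<in> space M. c/4 \<le> (\<Sum>i<n. err (Z i \<omega>)) / n}"
  have "{\<omega> \<in> space M. ?m + c \<le> (\<Sum>i<n. g (Z i \<omega>)) / n} \<subseteq> A \<union> B"
  proof safe
    fix \<omega> assume \<omega>: "\<omega> \<in> space M" and large: "?m + c \<le> (\<Sum>i<n. g (Z i \<omega>)) / n" and "\<omega> \<notin> B"
    then have "(\<Sum>i<n. err (Z i \<omega>)) / n < c/4" by (simp add: B_def)
    moreover have "(\<Sum>i<n. g (Z i \<omega>)) / n \<le> (\<Sum>i<n. trunc (Z i \<omega>)) / n + (\<Sum>i<n. err (Z i \<omega>)) / n"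
      unfolding err_def by (rule mean_le_mean_plus_mean_abs_diff)
    ultimately have "?mK + c/2 \<le> (\<Sum>i<n. trunc (Z i \<omega>)) / n"
      using large m_ge small unfolding err_def by linarith
    then show "\<omega> \<in> A" using \<omega> by (simp add: A_def)
  qed
  moreover have "A \<in> events" "B \<in> events" unfolding A_def B_def using Z_meas by measurable
  ultimately have "prob {\<omega> \<in> space M. ?m + c \<le> (\<Sum>i<n. g (Z i \<omega>)) / n} \<le> prob (A \<union> B)"
    by (intro finite_measure_mono) auto
  also have "\<dots> \<le> prob A + prob B" using \<open>A \<in> events\<close> \<open>B \<in> events\<close> by (rule measure_Un_le)
  also have "prob A \<le> exp (- 2 * real n * (c/2)\<^sup>2 / (real K - - real K)\<^sup>2)"
    unfolding A_def
    by (rule Hoeffding_iid_mean_ge[where Z=Z and N=N, OF Z_meas indep same])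
      (use \<open>0 < c\<close> \<open>0 < K\<close> \<open>0 < n\<close> in \<open>auto simp: trunc_def\<close>)
  also have "prob B \<le> expectation (\<lambda>\<omega>. err (Z 0 \<omega>)) / (c/4)"
    unfolding B_def
    by (rule Markov_iid_mean_ge[where Z=Z and N=N, OF Z_meas same])
      (use int int_trunc \<open>0 < c\<close> \<open>0 < n\<close> in \<open>auto simp: err_def\<close>)
  finally show ?thesis by (simp add: err_def)
qed

lemma weak_law_upper_tail:
  fixes Z :: "nat \<Rightarrow> 'a \<Rightarrow> 'b" and g :: "'b \<Rightarrow> real"
  assumes Z_meas: "\<And>i. Z i \<in> measurable M N" and indep: "indep_vars (\<lambda>_. N) Z UNIV"
    and same: "\<And>i. distr M N (Z i) = distr M N (Z 0)"
    and g [measurable]: "g \<in> borel_measurable N" and int: "integrable M (\<lambda>\<omega>. g (Z 0 \<omega>))"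
    and "0 < c"
  shows "(\<lambda>n. prob {\<omega> \<in> space M. expectation (\<lambda>\<omega>. g (Z 0 \<omega>)) + c \<le> (\<Sum>i<n. g (Z i \<omega>)) / n})
    \<longlonglongrightarrow> 0"
proof (rule order_tendstoI)
  fix a :: real assume "a < 0"
  then have "a < prob A" for A using measure_nonneg[of M A] by linarith
  then show "\<forall>\<^sub>F n in sequentially.
      a < prob {\<omega> \<in> space M. expectation (\<lambda>\<omega>. g (Z 0 \<omega>)) + c \<le> (\<Sum>i<n. g (Z i \<omega>)) / n}"
    by simp
next
  fix e :: real assume "0 < e"
  define err where "err K = expectation (\<lambda>\<omega>. \<bar>g (Z 0 \<omega>) - max (- real K) (min (real K) (g (Z 0 \<omega>)))\<bar>)"
    for K :: nat
  have "\<forall>\<^sub>F K in sequentially. 0 < K \<and> err K < min (c/4) (e * c/8)"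
    using truncation_error_tendsto_0[OF int] \<open>0 < c\<close> \<open>0 < e\<close> unfolding err_def[abs_def]
    by (intro eventually_conj eventually_gt_at_top order_tendstoD) auto
  then obtain K where "\<And>K'. K \<le> K' \<Longrightarrow> 0 < K' \<and> err K' < min (c/4) (e * c/8)"
    unfolding eventually_sequentially by blast
  from this[OF order_refl] have "0 < K" and small: "err K < c/4" "err K / (c/4) < e/2"
    using \<open>0 < c\<close> by (auto simp: field_simps)
  define a where "a = 2 * (c/2)\<^sup>2 / (real K - - real K)\<^sup>2"
  have "0 < a" using \<open>0 < c\<close> \<open>0 < K\<close> by (simp add: a_def)
  have "(\<lambda>n. exp (- a) ^ n) \<longlonglongrightarrow> 0" by (rule LIMSEQ_power_zero) (use \<open>0 < a\<close> in simp)
  moreover have "exp (- 2 * real n * (c/2)\<^sup>2 / (real K - - real K)\<^sup>2) = exp (- a) ^ n" for n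
    by (simp add: a_def exp_of_nat_mult[symmetric])
  ultimately have "(\<lambda>n. exp (- 2 * real n * (c/2)\<^sup>2 / (real K - - real K)\<^sup>2)) \<longlonglongrightarrow> 0" by simp
  then have "\<forall>\<^sub>F n in sequentially. exp (- 2 * real n * (c/2)\<^sup>2 / (real K - - real K)\<^sup>2) < e/2 \<and> 0 < n"
    using \<open>0 < e\<close> by (intro eventually_conj eventually_gt_at_top order_tendstoD) auto
  then show "\<forall>\<^sub>F n in sequentially.
      prob {\<omega> \<in> space M. expectation (\<lambda>\<omega>. g (Z 0 \<omega>)) + c \<le> (\<Sum>i<n. g (Z i \<omega>)) / n} < e"
  proof (rule eventually_mono)
    fix n :: nat assume n: "exp (- 2 * real n * (c/2)\<^sup>2 / (real K - - real K)\<^sup>2) < e/2 \<and> 0 < n"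
    have "prob {\<omega> \<in> space M. expectation (\<lambda>\<omega>. g (Z 0 \<omega>)) + c \<le> (\<Sum>i<n. g (Z i \<omega>)) / n}
        \<le> exp (- 2 * real n * (c/2)\<^sup>2 / (real K - - real K)\<^sup>2) + err K / (c/4)"
      unfolding err_def
      by (rule prob_iid_mean_ge_truncation_bound[OF Z_meas indep same g int])
        (use \<open>0 < c\<close> \<open>0 < K\<close> n small in \<open>auto simp: err_def\<close>)
    then show "prob {\<omega> \<in> space M. expectation (\<lambda>\<omega>. g (Z 0 \<omega>)) + c \<le> (\<Sum>i<n. g (Z i \<omega>)) / n} < e"
      using n small by linarith
  qed
qed

end

lemma eventually_uniform_ln_approx:
  fixes f :: "'z \<Rightarrow> 't \<Rightarrow> real" and ftil :: "nat \<Rightarrow> 'z \<Rightarrow> 't \<Rightarrow> real"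
  assumes approx: "(\<lambda>r. SUP (z, \<theta>) \<in> A \<times> B. ereal \<bar>ftil r z \<theta> - f z \<theta>\<bar>) \<longlonglongrightarrow> 0"
    and R: "filterlim R at_top at_top"
    and "0 < \<delta>" and f_ge: "\<And>z \<theta>. z \<in> A \<Longrightarrow> \<theta> \<in> B \<Longrightarrow> \<delta> \<le> f z \<theta>" and "0 < \<eta>"
  shows "\<forall>\<^sub>F n in sequentially. \<forall>z\<in>A. \<forall>\<theta>\<in>B. \<bar>ln (ftil (R n) z \<theta>) - ln (f z \<theta>)\<bar> \<le> \<eta>"
proof -
  define \<rho> where "\<rho> = min (\<delta>/2) (\<delta> * \<eta>/2)"
  have "0 < \<rho>" using \<open>0 < \<delta>\<close> \<open>0 < \<eta>\<close> by (simp add: \<rho>_def)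
  have "\<forall>\<^sub>F r in sequentially. (SUP (z, \<theta>) \<in> A \<times> B. ereal \<bar>ftil r z \<theta> - f z \<theta>\<bar>) < ereal \<rho>"
    by (rule order_tendstoD(2)[OF approx]) (use \<open>0 < \<rho>\<close> in simp)
  then have "\<forall>\<^sub>F r in sequentially. \<forall>z\<in>A. \<forall>\<theta>\<in>B. \<bar>ln (ftil r z \<theta>) - ln (f z \<theta>)\<bar> \<le> \<eta>"
  proof (rule eventually_mono, intro ballI)
    fix r z \<theta> assume sup: "(SUP (z, \<theta>) \<in> A \<times> B. ereal \<bar>ftil r z \<theta> - f z \<theta>\<bar>) < ereal \<rho>"
      and "z \<in> A" "\<theta> \<in> B"
    have "ereal \<bar>ftil r z \<theta> - f z \<theta>\<bar> \<le> (SUP (z, \<theta>) \<in> A \<times> B. ereal \<bar>ftil r z \<theta> - f z \<theta>\<bar>)"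
      using SUP_upper[of "(z, \<theta>)" "A \<times> B" "\<lambda>(z, \<theta>). ereal \<bar>ftil r z \<theta> - f z \<theta>\<bar>"] \<open>z \<in> A\<close> \<open>\<theta> \<in> B\<close>
      by simp
    then have "ereal \<bar>ftil r z \<theta> - f z \<theta>\<bar> < ereal \<rho>" using sup by (rule le_less_trans)
    then have close: "\<bar>ftil r z \<theta> - f z \<theta>\<bar> < \<rho>" by simp
    have "\<delta> \<le> f z \<theta>" using f_ge \<open>z \<in> A\<close> \<open>\<theta> \<in> B\<close> .
    moreover have "\<bar>ftil r z \<theta> - f z \<theta>\<bar> < \<delta>/2" using close by (simp add: \<rho>_def)
    ultimately have "\<delta>/2 \<le> ftil r z \<theta>" "\<delta>/2 \<le> f z \<theta>"
      using \<open>0 < \<delta>\<close> unfolding abs_less_iff by linarith+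
    then have "\<bar>ln (ftil r z \<theta>) - ln (f z \<theta>)\<bar> \<le> \<bar>ftil r z \<theta> - f z \<theta>\<bar> / (\<delta>/2)"
      by (intro abs_ln_diff_le) (use \<open>0 < \<delta>\<close> in auto)
    also have "\<dots> \<le> (\<delta> * \<eta>/2) / (\<delta>/2)"
      using close \<open>0 < \<delta>\<close> by (intro divide_right_mono) (auto simp: \<rho>_def)
    also have "\<dots> = \<eta>" using \<open>0 < \<delta>\<close> by simp
    finally show "\<bar>ln (ftil r z \<theta>) - ln (f z \<theta>)\<bar> \<le> \<eta>" .
  qed
  then show ?thesis using R by (rule eventually_compose_filterlim)
qed

text \<open>The set \<open>C\<close> is a countable dense subset of \<open>\<Theta>\<close>: suprema of log-densities over (parts of)
  \<open>C\<close> are measurable, and on the full-measure set of regular points they bound the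
  log-densities on all of \<open>\<Theta>\<close> by continuity.\<close>
locale iid_density_model = prob_space M for M :: "'a measure" +
  fixes \<mu> :: "'z measure" and \<Theta> :: "'t::metric_space set" and \<theta>0 :: 't
    and f :: "'z \<Rightarrow> 't \<Rightarrow> real" and Z :: "nat \<Rightarrow> 'a \<Rightarrow> 'z" and C :: "'t set" and \<delta> :: real
  assumes dens_meas: "\<And>\<theta>. \<theta> \<in> \<Theta> \<Longrightarrow> (\<lambda>z. f z \<theta>) \<in> borel_measurable \<mu>"
    and dens_one: "\<And>\<theta>. \<theta> \<in> \<Theta> \<Longrightarrow> (\<integral>\<^sup>+ z. ennreal (f z \<theta>) \<partial>\<mu>) = 1"
    and delta_pos: "0 < \<delta>"
    and delta_le: "\<And>z \<theta>. z \<in> space \<mu> \<Longrightarrow> \<theta> \<in> \<Theta> \<Longrightarrow> \<delta> \<le> f z \<theta>"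
    and Z_meas: "\<And>i. Z i \<in> measurable M \<mu>"
    and Z_indep: "indep_vars (\<lambda>_. \<mu>) Z UNIV"
    and Z_distr: "\<And>i. distr M \<mu> (Z i) = density \<mu> (\<lambda>z. ennreal (f z \<theta>0))"
    and ident: "\<And>\<theta>. \<theta> \<in> \<Theta> \<Longrightarrow> \<theta> \<noteq> \<theta>0 \<Longrightarrow> \<not> (AE z in \<mu>. f z \<theta> = f z \<theta>0)"
    and theta0_in: "\<theta>0 \<in> \<Theta>"
    and cont: "AE z in density \<mu> (\<lambda>z. ennreal (f z \<theta>0)). continuous_on \<Theta> (\<lambda>\<theta>. ln (f z \<theta>))"
    and dom: "(\<integral>\<^sup>+ z. (SUP \<theta>\<in>\<Theta>. ennreal \<bar>ln (f z \<theta>)\<bar>) \<partial>density \<mu> (\<lambda>z. ennreal (f z \<theta>0))) < \<infinity>"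
    and C_countable: "countable C" and C_subset: "C \<subseteq> \<Theta>" and C_dense: "\<Theta> \<subseteq> closure C"
begin

definition P0 :: "'z measure" where "P0 = density \<mu> (\<lambda>z. ennreal (f z \<theta>0))"

definition sup_abs_ln :: "'z \<Rightarrow> ennreal" where
  "sup_abs_ln z = (SUP c\<in>C. ennreal \<bar>ln (f z c)\<bar>)"

definition ln_bound :: "'z \<Rightarrow> real" where "ln_bound z = enn2real (sup_abs_ln z)"

definition regular :: "'z set" where
  "regular = {z \<in> space \<mu>. continuous_on \<Theta> (\<lambda>\<theta>. ln (f z \<theta>)) \<and> sup_abs_ln z < \<infinity>}"

lemma P0_distr: "distr M \<mu> (Z i) = P0"
  unfolding P0_def by (rule Z_distr)

lemma sets_P0 [simp]: "sets P0 = sets \<mu>" and space_P0 [simp]: "space P0 = space \<mu>"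
  unfolding P0_def by auto

lemma measurable_P0_iff [simp]: "g \<in> borel_measurable P0 \<longleftrightarrow> g \<in> borel_measurable \<mu>"
  unfolding P0_def by simp

lemma f_pos: "z \<in> space \<mu> \<Longrightarrow> \<theta> \<in> \<Theta> \<Longrightarrow> 0 < f z \<theta>"
  using delta_le[of z \<theta>] delta_pos by linarith

lemma measurable_ln_f [measurable]: "\<theta> \<in> \<Theta> \<Longrightarrow> (\<lambda>z. ln (f z \<theta>)) \<in> borel_measurable \<mu>"
  using dens_meas by measurable

lemma measurable_sup_abs_ln [measurable]: "sup_abs_ln \<in> borel_measurable \<mu>"
  unfolding sup_abs_ln_def using C_countable C_subset by (intro borel_measurable_SUP) auto

lemma measurable_ln_bound [measurable]: "ln_bound \<in> borel_measurable \<mu>"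
  unfolding ln_bound_def by measurable

lemma nn_integral_sup_abs_ln_finite: "(\<integral>\<^sup>+ z. sup_abs_ln z \<partial>P0) < \<infinity>"
proof -
  have "(\<integral>\<^sup>+ z. sup_abs_ln z \<partial>P0) \<le> (\<integral>\<^sup>+ z. (SUP \<theta>\<in>\<Theta>. ennreal \<bar>ln (f z \<theta>)\<bar>) \<partial>P0)"
    unfolding sup_abs_ln_def using C_subset by (intro nn_integral_mono SUP_subset_mono) auto
  also have "\<dots> < \<infinity>" using dom unfolding P0_def .
  finally show ?thesis .
qed

lemma AE_regular: "AE z in P0. z \<in> regular"
proof -
  have "AE z in P0. sup_abs_ln z \<noteq> \<infinity>"
    by (rule nn_integral_PInf_AE) (use nn_integral_sup_abs_ln_finite in auto)
  moreover have "AE z in P0. continuous_on \<Theta> (\<lambda>\<theta>. ln (f z \<theta>))" using cont unfolding P0_def .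
  moreover have "AE z in P0. z \<in> space \<mu>" using AE_space[of P0] by simp
  ultimately show ?thesis unfolding regular_def by eventually_elim (auto simp: less_top)
qed

lemma abs_ln_f_le_ln_bound:
  assumes z: "z \<in> regular" and "\<theta> \<in> \<Theta>"
  shows "\<bar>ln (f z \<theta>)\<bar> \<le> ln_bound z"
proof (rule continuous_on_le_from_dense[where S=\<Theta> and C=C and U=UNIV])
  show "continuous_on \<Theta> (\<lambda>\<theta>. \<bar>ln (f z \<theta>)\<bar>)"
    using z unfolding regular_def by (auto intro: continuous_on_rabs)
  fix c assume "c \<in> C"
  then have "ennreal \<bar>ln (f z c)\<bar> \<le> sup_abs_ln z" unfolding sup_abs_ln_def by (rule SUP_upper)
  moreover have "sup_abs_ln z < top" using z unfolding regular_def by auto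
  ultimately have "enn2real (ennreal \<bar>ln (f z c)\<bar>) \<le> enn2real (sup_abs_ln z)" by (rule enn2real_mono)
  then show "\<bar>ln (f z c)\<bar> \<le> ln_bound z" by (simp add: ln_bound_def)
qed (use assms C_subset C_dense in auto)

lemma abs_ln_bound [simp]: "\<bar>ln_bound z\<bar> = ln_bound z"
  by (simp add: ln_bound_def)

lemma integrable_ln_bound: "integrable P0 ln_bound"
proof (rule integrableI_nonneg)
  have "(\<integral>\<^sup>+ z. ennreal (ln_bound z) \<partial>P0) \<le> (\<integral>\<^sup>+ z. sup_abs_ln z \<partial>P0)"
    unfolding ln_bound_def by (intro nn_integral_mono) (auto simp: ennreal_enn2real_if)
  then show "(\<integral>\<^sup>+ z. ennreal (ln_bound z) \<partial>P0) < \<infinity>"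
    using nn_integral_sup_abs_ln_finite by simp
qed (auto simp: ln_bound_def)

lemma integrable_ln_f:
  assumes "\<theta> \<in> \<Theta>"
  shows "integrable P0 (\<lambda>z. ln (f z \<theta>))"
proof (rule Bochner_Integration.integrable_bound[OF integrable_ln_bound])
  show "AE z in P0. norm (ln (f z \<theta>)) \<le> norm (ln_bound z)"
    using AE_regular by eventually_elim (use abs_ln_f_le_ln_bound assms in auto)
qed (use assms in simp)

lemma expected_ln_f_less:
  assumes "\<theta> \<in> \<Theta>" "\<theta> \<noteq> \<theta>0"
  shows "(\<integral>z. ln (f z \<theta>) \<partial>P0) < (\<integral>z. ln (f z \<theta>0) \<partial>P0)"
  unfolding P0_def
  by (rule Gibbs_inequality_strict)
    (use assms theta0_in dens_meas dens_one f_pos ident integrable_ln_f in \<open>auto simp: P0_def\<close>)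

text \<open>Capping at \<open>ln_bound z\<close> keeps the supremum bounded above for every \<open>z\<close>, hence measurable;
  at regular points the cap is inactive.\<close>
definition local_sup :: "'t \<Rightarrow> real \<Rightarrow> 'z \<Rightarrow> real" where
  "local_sup \<theta>1 \<rho> z = (SUP c \<in> C \<inter> ball \<theta>1 \<rho>. min (ln_bound z) (ln (f z c)))"

lemma bdd_above_local_sup: "bdd_above ((\<lambda>c. min (ln_bound z) (ln (f z c))) ` (C \<inter> ball \<theta>1 \<rho>))"
  by (rule bdd_aboveI[of _ "ln_bound z"]) auto

lemma measurable_local_sup [measurable]: "local_sup \<theta>1 \<rho> \<in> borel_measurable \<mu>"
  unfolding local_sup_def
proof (rule borel_measurable_cSUP)
  show "countable (C \<inter> ball \<theta>1 \<rho>)" using C_countable by auto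
  fix c assume "c \<in> C \<inter> ball \<theta>1 \<rho>"
  then have "c \<in> \<Theta>" using C_subset by auto
  then show "(\<lambda>z. min (ln_bound z) (ln (f z c))) \<in> borel_measurable \<mu>" by measurable
qed (rule bdd_above_local_sup)

lemma C_Int_ball_nonempty:
  assumes "\<theta>1 \<in> \<Theta>" "0 < \<rho>"
  shows "C \<inter> ball \<theta>1 \<rho> \<noteq> {}"
proof -
  have "\<theta>1 \<in> ball \<theta>1 \<rho> \<inter> closure C" using assms C_dense by auto
  then have "ball \<theta>1 \<rho> \<inter> closure C \<noteq> {}" by blast
  then show ?thesis using open_Int_closure_eq_empty[of "ball \<theta>1 \<rho>" C] by auto
qed

lemma local_sup_le_ln_bound: "\<theta>1 \<in> \<Theta> \<Longrightarrow> 0 < \<rho> \<Longrightarrow> local_sup \<theta>1 \<rho> z \<le> ln_bound z"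
  unfolding local_sup_def by (intro cSUP_least C_Int_ball_nonempty) auto

lemma ln_f_le_local_sup:
  assumes z: "z \<in> regular" and "\<theta> \<in> \<Theta>" "\<theta> \<in> ball \<theta>1 \<rho>"
  shows "ln (f z \<theta>) \<le> local_sup \<theta>1 \<rho> z"
proof (rule continuous_on_le_from_dense[where S=\<Theta> and C=C and U="ball \<theta>1 \<rho>"])
  show "continuous_on \<Theta> (\<lambda>\<theta>. ln (f z \<theta>))" using z unfolding regular_def by auto
  fix c assume c: "c \<in> C" "c \<in> ball \<theta>1 \<rho>"
  have "ln (f z c) = min (ln_bound z) (ln (f z c))"
    using abs_ln_f_le_ln_bound[OF z, of c] c C_subset by auto
  also have "\<dots> \<le> local_sup \<theta>1 \<rho> z"
    unfolding local_sup_def by (rule cSUP_upper[OF _ bdd_above_local_sup]) (use c in auto)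
  finally show "ln (f z c) \<le> local_sup \<theta>1 \<rho> z" .
qed (use assms C_subset C_dense in auto)

lemma abs_local_sup_le:
  assumes "z \<in> regular" "\<theta>1 \<in> \<Theta>" "0 < \<rho>"
  shows "\<bar>local_sup \<theta>1 \<rho> z\<bar> \<le> ln_bound z"
  using ln_f_le_local_sup[of z \<theta>1 \<theta>1 \<rho>] abs_ln_f_le_ln_bound[of z \<theta>1]
    local_sup_le_ln_bound[of \<theta>1 \<rho> z] assms by auto

lemma local_sup_tendsto:
  assumes z: "z \<in> regular" and "\<theta>1 \<in> \<Theta>"
  shows "(\<lambda>k. local_sup \<theta>1 (inverse (Suc k)) z) \<longlonglongrightarrow> ln (f z \<theta>1)"
proof (rule order_tendstoI)
  fix a assume "a < ln (f z \<theta>1)"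
  have "ln (f z \<theta>1) \<le> local_sup \<theta>1 (inverse (Suc k)) z" for k
    by (rule ln_f_le_local_sup[OF z \<open>\<theta>1 \<in> \<Theta>\<close>]) simp
  then have "a < local_sup \<theta>1 (inverse (Suc k)) z" for k
    using \<open>a < ln (f z \<theta>1)\<close> less_le_trans by blast
  then show "\<forall>\<^sub>F k in sequentially. a < local_sup \<theta>1 (inverse (Suc k)) z" by simp
next
  fix a assume "ln (f z \<theta>1) < a"
  define b where "b = (a - ln (f z \<theta>1)) / 2"
  have "0 < b" using \<open>ln (f z \<theta>1) < a\<close> by (simp add: b_def)
  have a: "a = ln (f z \<theta>1) + 2 * b" by (simp add: b_def field_simps)
  have "continuous_on \<Theta> (\<lambda>\<theta>. ln (f z \<theta>))" using z unfolding regular_def by auto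
  then obtain d where "0 < d"
    and d: "\<forall>\<theta>\<in>\<Theta>. dist \<theta> \<theta>1 < d \<longrightarrow> dist (ln (f z \<theta>)) (ln (f z \<theta>1)) < b"
    unfolding continuous_on_iff using \<open>\<theta>1 \<in> \<Theta>\<close> \<open>0 < b\<close> by blast
  have "\<forall>\<^sub>F k in sequentially. inverse (real (Suc k)) < d"
    using order_tendstoD(2)[OF LIMSEQ_inverse_real_of_nat \<open>0 < d\<close>] .
  then show "\<forall>\<^sub>F k in sequentially. local_sup \<theta>1 (inverse (Suc k)) z < a"
  proof (rule eventually_mono)
    fix k assume small: "inverse (real (Suc k)) < d"
    have "local_sup \<theta>1 (inverse (Suc k)) z \<le> ln (f z \<theta>1) + b"
      unfolding local_sup_def
    proof (rule cSUP_least)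
      show "C \<inter> ball \<theta>1 (inverse (Suc k)) \<noteq> {}" using C_Int_ball_nonempty \<open>\<theta>1 \<in> \<Theta>\<close> by simp
      fix c assume "c \<in> C \<inter> ball \<theta>1 (inverse (Suc k))"
      then have "c \<in> \<Theta>" "dist c \<theta>1 < d" using C_subset small by (auto simp: dist_commute)
      then have "dist (ln (f z c)) (ln (f z \<theta>1)) < b" using d by blast
      then have "ln (f z c) < ln (f z \<theta>1) + b" by (simp add: dist_real_def abs_less_iff)
      then show "min (ln_bound z) (ln (f z c)) \<le> ln (f z \<theta>1) + b" by (simp add: min.coboundedI2)
    qed
    then show "local_sup \<theta>1 (inverse (Suc k)) z < a" using a \<open>0 < b\<close> by linarith
  qed
qed

lemma integrable_local_sup:
  assumes "\<theta>1 \<in> \<Theta>" "0 < \<rho>"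
  shows "integrable P0 (local_sup \<theta>1 \<rho>)"
proof (rule Bochner_Integration.integrable_bound[OF integrable_ln_bound])
  show "AE z in P0. norm (local_sup \<theta>1 \<rho> z) \<le> norm (ln_bound z)"
    using AE_regular by eventually_elim (use abs_local_sup_le assms in auto)
qed simp

lemma local_sup_gap:
  assumes "\<theta>1 \<in> \<Theta>" "\<theta>1 \<noteq> \<theta>0"
  obtains \<rho> where "0 < \<rho>" "(\<integral>z. local_sup \<theta>1 \<rho> z \<partial>P0) < (\<integral>z. ln (f z \<theta>0) \<partial>P0)"
proof -
  have "(\<lambda>k. \<integral>z. local_sup \<theta>1 (inverse (Suc k)) z \<partial>P0) \<longlonglongrightarrow> (\<integral>z. ln (f z \<theta>1) \<partial>P0)"
  proof (rule integral_dominated_convergence[where w=ln_bound])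
    show "AE z in P0. (\<lambda>k. local_sup \<theta>1 (inverse (Suc k)) z) \<longlonglongrightarrow> ln (f z \<theta>1)"
      using AE_regular by eventually_elim (use local_sup_tendsto assms in auto)
    show "AE z in P0. norm (local_sup \<theta>1 (inverse (Suc k)) z) \<le> ln_bound z" for k
      using AE_regular by eventually_elim (use abs_local_sup_le assms in auto)
  qed (use assms integrable_ln_bound in auto)
  from order_tendstoD(2)[OF this expected_ln_f_less[OF assms]] obtain k where
    "(\<integral>z. local_sup \<theta>1 (inverse (Suc k)) z \<partial>P0) < (\<integral>z. ln (f z \<theta>0) \<partial>P0)"
    by (auto simp: eventually_sequentially)
  then show ?thesis by (intro that[of "inverse (Suc k)"]) auto
qed

lemma local_sup_finite_cover:
  assumes "compact K" "K \<subseteq> \<Theta>" "\<theta>0 \<notin> K"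
  obtains F \<gamma> \<rho> where "finite F" "F \<subseteq> \<Theta>" "0 < \<gamma>" "K \<subseteq> (\<Union>j\<in>F. ball j (\<rho> j))"
    "\<And>j. j \<in> F \<Longrightarrow> 0 < \<rho> j"
    "\<And>j. j \<in> F \<Longrightarrow> (\<integral>z. local_sup j (\<rho> j) z \<partial>P0) + \<gamma> \<le> (\<integral>z. ln (f z \<theta>0) \<partial>P0)"
proof -
  have "\<exists>\<rho>>0. (\<integral>z. local_sup \<theta>1 \<rho> z \<partial>P0) < (\<integral>z. ln (f z \<theta>0) \<partial>P0)" if "\<theta>1 \<in> K" for \<theta>1
  proof -
    have "\<theta>1 \<in> \<Theta>" "\<theta>1 \<noteq> \<theta>0" using that assms by auto
    then obtain \<rho> where "0 < \<rho>" "(\<integral>z. local_sup \<theta>1 \<rho> z \<partial>P0) < (\<integral>z. ln (f z \<theta>0) \<partial>P0)"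
      by (rule local_sup_gap)
    then show ?thesis by blast
  qed
  then obtain \<rho> where \<rho>: "\<And>\<theta>1. \<theta>1 \<in> K \<Longrightarrow> 0 < \<rho> \<theta>1"
    "\<And>\<theta>1. \<theta>1 \<in> K \<Longrightarrow> (\<integral>z. local_sup \<theta>1 (\<rho> \<theta>1) z \<partial>P0) < (\<integral>z. ln (f z \<theta>0) \<partial>P0)"
    using bchoice[of K "\<lambda>\<theta>1 \<rho>. 0 < \<rho> \<and> (\<integral>z. local_sup \<theta>1 \<rho> z \<partial>P0) < (\<integral>z. ln (f z \<theta>0) \<partial>P0)"]
    by blast
  have "K \<subseteq> (\<Union>\<theta>1\<in>K. ball \<theta>1 (\<rho> \<theta>1))" using \<rho>(1) by auto
  from compactE_image[OF \<open>compact K\<close> _ this] obtain F where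
    F: "F \<subseteq> K" "finite F" "K \<subseteq> (\<Union>j\<in>F. ball j (\<rho> j))"
    by auto
  define gap where "gap j = (\<integral>z. ln (f z \<theta>0) \<partial>P0) - (\<integral>z. local_sup j (\<rho> j) z \<partial>P0)" for j
  define \<gamma> where "\<gamma> = Min (insert 1 (gap ` F))"
  have "0 < \<gamma>" unfolding \<gamma>_def using F \<rho>(2) by (subst Min_gr_iff) (auto simp: gap_def)
  moreover have "(\<integral>z. local_sup j (\<rho> j) z \<partial>P0) + \<gamma> \<le> (\<integral>z. ln (f z \<theta>0) \<partial>P0)" if "j \<in> F" for j
  proof -
    have "\<gamma> \<le> gap j" unfolding \<gamma>_def using F(2) that by (intro Min_le) auto
    then show ?thesis by (simp add: gap_def)
  qed
  ultimately show ?thesis using F \<rho>(1) assms(2) by (intro that[of F \<gamma> \<rho>]) auto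
qed

lemma AE_all_regular: "AE \<omega> in M. \<forall>i. Z i \<omega> \<in> regular"
proof -
  from AE_regular obtain N where N: "{z \<in> space \<mu>. z \<notin> regular} \<subseteq> N" "N \<in> sets \<mu>" "emeasure P0 N = 0"
    by (auto elim!: AE_E)
  have "AE z in P0. z \<notin> N" by (rule AE_not_in) (use N in auto)
  then have "AE \<omega> in M. Z i \<omega> \<notin> N" for i
    unfolding P0_distr[symmetric, of i] by (subst (asm) AE_distr_iff[OF Z_meas]) (use N in auto)
  then have "AE \<omega> in M. \<forall>i. Z i \<omega> \<notin> N" by (simp add: AE_all_countable)
  then show ?thesis
  proof (rule AE_mp, intro AE_I2 impI allI)
    fix \<omega> i assume "\<omega> \<in> space M" "\<forall>i. Z i \<omega> \<notin> N"
    moreover have "Z i \<omega> \<in> space \<mu>" using measurable_space[OF Z_meas \<open>\<omega> \<in> space M\<close>] .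
    ultimately show "Z i \<omega> \<in> regular" using N(1) by auto
  qed
qed

lemma mean_local_sup_gap_at_maximiser:
  fixes ftil :: "nat \<Rightarrow> 'z \<Rightarrow> 't \<Rightarrow> real"
  assumes regular: "\<And>i. Z i \<omega> \<in> regular" and "0 < n"
    and approx: "\<forall>z\<in>space \<mu>. \<forall>\<theta>\<in>\<Theta>. \<bar>ln (ftil (R n) z \<theta>) - ln (f z \<theta>)\<bar> \<le> \<eta>"
    and \<theta>: "\<theta> \<in> \<Theta>" "\<theta> \<in> ball \<theta>1 \<rho>"
    and max: "L_tilde ftil R Z n \<omega> \<theta>0 \<le> L_tilde ftil R Z n \<omega> \<theta>"
  shows "- 2 * \<eta> \<le> (\<Sum>i<n. local_sup \<theta>1 \<rho> (Z i \<omega>) - ln (f (Z i \<omega>) \<theta>0)) / n"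
proof -
  have close: "\<bar>(\<Sum>i<n. ln (ftil (R n) (Z i \<omega>) \<theta>')) - (\<Sum>i<n. ln (f (Z i \<omega>) \<theta>'))\<bar> \<le> n * \<eta>"
    if "\<theta>' \<in> \<Theta>" for \<theta>'
  proof -
    have "\<bar>(\<Sum>i<n. ln (ftil (R n) (Z i \<omega>) \<theta>')) - (\<Sum>i<n. ln (f (Z i \<omega>) \<theta>'))\<bar>
        \<le> (\<Sum>i<n. \<bar>ln (ftil (R n) (Z i \<omega>) \<theta>') - ln (f (Z i \<omega>) \<theta>')\<bar>)"
      unfolding sum_subtractf[symmetric] by (rule sum_abs)
    also have "\<dots> \<le> (\<Sum>i<n. \<eta>)"
      using approx regular that by (intro sum_mono) (auto simp: regular_def)
    also have "\<dots> = n * \<eta>" by simp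
    finally show ?thesis .
  qed
  have "(\<Sum>i<n. ln (ftil (R n) (Z i \<omega>) \<theta>0)) \<le> (\<Sum>i<n. ln (ftil (R n) (Z i \<omega>) \<theta>))"
    using max \<open>0 < n\<close> by (simp add: L_tilde_def divide_le_cancel)
  moreover have "(\<Sum>i<n. ln (f (Z i \<omega>) \<theta>)) \<le> (\<Sum>i<n. local_sup \<theta>1 \<rho> (Z i \<omega>))"
    using ln_f_le_local_sup[OF regular \<theta>] by (simp add: sum_mono)
  ultimately have "- 2 * (n * \<eta>) \<le> (\<Sum>i<n. local_sup \<theta>1 \<rho> (Z i \<omega>)) - (\<Sum>i<n. ln (f (Z i \<omega>) \<theta>0))"
    using close[OF \<theta>(1)] close[OF theta0_in] unfolding abs_le_iff by linarith
  then show ?thesis using \<open>0 < n\<close> by (simp add: sum_subtractf le_divide_eq algebra_simps)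
qed

lemma integrable_local_sup_gap:
  assumes "\<theta>1 \<in> \<Theta>" "0 < \<rho>"
  shows "integrable M (\<lambda>\<omega>. local_sup \<theta>1 \<rho> (Z 0 \<omega>) - ln (f (Z 0 \<omega>) \<theta>0))"
  using integrable_local_sup[OF assms] integrable_ln_f[OF theta0_in] theta0_in
  unfolding P0_distr[symmetric, of 0] by (subst integrable_distr_eq[OF Z_meas, symmetric]) auto

lemma expectation_local_sup_gap:
  assumes "\<theta>1 \<in> \<Theta>" "0 < \<rho>"
  shows "expectation (\<lambda>\<omega>. local_sup \<theta>1 \<rho> (Z 0 \<omega>) - ln (f (Z 0 \<omega>) \<theta>0))
    = (\<integral>z. local_sup \<theta>1 \<rho> z \<partial>P0) - (\<integral>z. ln (f z \<theta>0) \<partial>P0)"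
proof -
  have "expectation (\<lambda>\<omega>. local_sup \<theta>1 \<rho> (Z 0 \<omega>) - ln (f (Z 0 \<omega>) \<theta>0))
      = (\<integral>z. local_sup \<theta>1 \<rho> z - ln (f z \<theta>0) \<partial>P0)"
    unfolding P0_distr[symmetric, of 0] using theta0_in by (subst integral_distr[OF Z_meas]) auto
  also have "\<dots> = (\<integral>z. local_sup \<theta>1 \<rho> z \<partial>P0) - (\<integral>z. ln (f z \<theta>0) \<partial>P0)"
    using integrable_local_sup[OF assms] integrable_ln_f[OF theta0_in] by simp
  finally show ?thesis .
qed

lemma consistency:
  fixes ftil :: "nat \<Rightarrow> 'z \<Rightarrow> 't \<Rightarrow> real" and \<theta>hat :: "nat \<Rightarrow> 'a \<Rightarrow> 't"
  assumes "compact \<Theta>"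
    and approx: "(\<lambda>r. SUP (z, \<theta>) \<in> space \<mu> \<times> \<Theta>. ereal \<bar>ftil r z \<theta> - f z \<theta>\<bar>) \<longlonglongrightarrow> 0"
    and R: "filterlim R at_top at_top"
    and \<theta>hat_in: "\<And>n \<omega>. \<omega> \<in> space M \<Longrightarrow> \<theta>hat n \<omega> \<in> \<Theta>"
    and \<theta>hat_max: "\<And>n \<omega> \<theta>. \<omega> \<in> space M \<Longrightarrow> \<theta> \<in> \<Theta> \<Longrightarrow>
        L_tilde ftil R Z n \<omega> \<theta> \<le> L_tilde ftil R Z n \<omega> (\<theta>hat n \<omega>)"
    and "0 < \<epsilon>"
  shows "(\<lambda>n. prob {\<omega> \<in> space M. \<epsilon> < dist (\<theta>hat n \<omega>) \<theta>0}) \<longlonglongrightarrow> 0"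
proof -
  define K where "K = \<Theta> \<inter> {\<theta>. \<epsilon> \<le> dist \<theta> \<theta>0}"
  have "compact K" unfolding K_def
    using \<open>compact \<Theta>\<close> by (intro compact_Int_closed closed_Collect_le continuous_intros)
  moreover have "K \<subseteq> \<Theta>" "\<theta>0 \<notin> K" using \<open>0 < \<epsilon>\<close> by (auto simp: K_def)
  ultimately obtain F \<gamma> \<rho> where F: "finite F" "F \<subseteq> \<Theta>" and "0 < \<gamma>"
    and cover: "K \<subseteq> (\<Union>j\<in>F. ball j (\<rho> j))" and \<rho>: "\<And>j. j \<in> F \<Longrightarrow> 0 < \<rho> j"
    and gap: "\<And>j. j \<in> F \<Longrightarrow> (\<integral>z. local_sup j (\<rho> j) z \<partial>P0) + \<gamma> \<le> (\<integral>z. ln (f z \<theta>0) \<partial>P0)"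
    by (rule local_sup_finite_cover) blast
  define W where "W j z = local_sup j (\<rho> j) z - ln (f z \<theta>0)" for j z
  define E where "E j n = {\<omega> \<in> space M. - \<gamma>/2 \<le> (\<Sum>i<n. W j (Z i \<omega>)) / n}" for j n
  have [measurable]: "W j \<in> borel_measurable \<mu>" for j unfolding W_def using theta0_in by measurable
  have E_events: "E j n \<in> events" for j n unfolding E_def using Z_meas by measurable
  have W_int: "integrable M (\<lambda>\<omega>. W j (Z 0 \<omega>))" if "j \<in> F" for j
    using integrable_local_sup_gap[of j "\<rho> j"] F \<rho> that by (auto simp: W_def)
  have E_tendsto: "(\<lambda>n. prob (E j n)) \<longlonglongrightarrow> 0" if "j \<in> F" for j
  proof (rule tendsto_sandwich[OF _ _ tendsto_const])
    have "expectation (\<lambda>\<omega>. W j (Z 0 \<omega>)) + \<gamma>/2 \<le> - \<gamma>/2"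
      using expectation_local_sup_gap[of j "\<rho> j"] gap[OF that] F \<rho>[OF that] that
      by (auto simp: W_def)
    then show "\<forall>\<^sub>F n in sequentially. prob (E j n) \<le>
        prob {\<omega> \<in> space M. expectation (\<lambda>\<omega>. W j (Z 0 \<omega>)) + \<gamma>/2 \<le> (\<Sum>i<n. W j (Z i \<omega>)) / n}"
      unfolding E_def using Z_meas by (intro always_eventually allI finite_measure_mono) auto
    show "(\<lambda>n. prob {\<omega> \<in> space M. expectation (\<lambda>\<omega>. W j (Z 0 \<omega>)) + \<gamma>/2 \<le> (\<Sum>i<n. W j (Z i \<omega>)) / n})
        \<longlonglongrightarrow> 0"
      by (rule weak_law_upper_tail[OF Z_meas Z_indep])
        (use P0_distr W_int that \<open>0 < \<gamma>\<close> in auto)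
  qed simp
  have "\<forall>\<^sub>F n in sequentially. \<forall>z\<in>space \<mu>. \<forall>\<theta>\<in>\<Theta>. \<bar>ln (ftil (R n) z \<theta>) - ln (f z \<theta>)\<bar> \<le> \<gamma>/4"
    by (rule eventually_uniform_ln_approx[OF approx R delta_pos delta_le]) (use \<open>0 < \<gamma>\<close> in auto)
  then have bound: "\<forall>\<^sub>F n in sequentially. prob {\<omega> \<in> space M. \<epsilon> < dist (\<theta>hat n \<omega>) \<theta>0} \<le> (\<Sum>j\<in>F. prob (E j n))"
  proof (rule eventually_mono[OF eventually_conj[OF _ eventually_gt_at_top[of 0]]])
    fix n :: nat
    assume n: "(\<forall>z\<in>space \<mu>. \<forall>\<theta>\<in>\<Theta>. \<bar>ln (ftil (R n) z \<theta>) - ln (f z \<theta>)\<bar> \<le> \<gamma>/4) \<and> 0 < n"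
    have "AE \<omega> in M. \<omega> \<in> {\<omega> \<in> space M. \<epsilon> < dist (\<theta>hat n \<omega>) \<theta>0} \<longrightarrow> \<omega> \<in> (\<Union>j\<in>F. E j n)"
      using AE_all_regular
    proof (rule AE_mp, intro AE_I2 impI)
      fix \<omega> assume regular: "\<forall>i. Z i \<omega> \<in> regular" and "\<omega> \<in> {\<omega> \<in> space M. \<epsilon> < dist (\<theta>hat n \<omega>) \<theta>0}"
      then have \<omega>: "\<omega> \<in> space M" and "\<theta>hat n \<omega> \<in> K" using \<theta>hat_in by (auto simp: K_def)
      then obtain j where "j \<in> F" and ball: "\<theta>hat n \<omega> \<in> ball j (\<rho> j)" using cover by auto
      have "- 2 * (\<gamma>/4) \<le> (\<Sum>i<n. W j (Z i \<omega>)) / n"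
        unfolding W_def
        by (rule mean_local_sup_gap_at_maximiser[of \<omega> n ftil R])
          (use regular n \<theta>hat_in[OF \<omega>] ball \<theta>hat_max[OF \<omega> theta0_in] in auto)
      then have "\<omega> \<in> E j n" using \<omega> by (simp add: E_def)
      then show "\<omega> \<in> (\<Union>j\<in>F. E j n)" using \<open>j \<in> F\<close> by auto
    qed
    then have "prob {\<omega> \<in> space M. \<epsilon> < dist (\<theta>hat n \<omega>) \<theta>0} \<le> prob (\<Union>j\<in>F. E j n)"
      by (rule finite_measure_mono_AE) (use F E_events in auto)
    also have "\<dots> \<le> (\<Sum>j\<in>F. prob (E j n))"
      by (rule finite_measure_subadditive_finite) (use F E_events in auto)
    finally show "prob {\<omega> \<in> space M. \<epsilon> < dist (\<theta>hat n \<omega>) \<theta>0} \<le> (\<Sum>j\<in>F. prob (E j n))" .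
  qed
  have lim: "(\<lambda>n. \<Sum>j\<in>F. prob (E j n)) \<longlonglongrightarrow> 0" using E_tendsto by (rule tendsto_null_sum)
  show ?thesis by (rule tendsto_sandwich[OF _ bound tendsto_const lim]) simp
qed

end

theorem theorem7:
  fixes M :: "'a measure"
    and \<mu> :: "(real^'q::finite) measure"
    and \<Theta> :: "(real^'p::finite) set"
    and \<theta>0 :: "real^'p"
    and f :: "real^'q \<Rightarrow> real^'p \<Rightarrow> real"
    and ftil :: "nat \<Rightarrow> real^'q \<Rightarrow> real^'p \<Rightarrow> real"
    and R :: "nat \<Rightarrow> nat"
    and Z :: "nat \<Rightarrow> 'a \<Rightarrow> real^'q"
    and \<theta>hat :: "nat \<Rightarrow> 'a \<Rightarrow> real^'p"
  assumes prob: "prob_space M"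
    \<comment> \<open>family of densities (w.r.t. the base measure \<mu> on the sample space space \<mu>)\<close>
    and dens_meas: "\<And>\<theta>. \<theta> \<in> \<Theta> \<Longrightarrow> (\<lambda>z. f z \<theta>) \<in> borel_measurable \<mu>"
    and dens_nonneg: "\<And>\<theta> z. \<theta> \<in> \<Theta> \<Longrightarrow> z \<in> space \<mu> \<Longrightarrow> 0 \<le> f z \<theta>"
    and dens_one: "\<And>\<theta>. \<theta> \<in> \<Theta> \<Longrightarrow> (\<integral>\<^sup>+ z. ennreal (f z \<theta>) \<partial>\<mu>) = 1"
    \<comment> \<open>i.i.d. sample from f(.;\<theta>0)\<close>
    and Z_meas: "\<And>i. Z i \<in> measurable M \<mu>"
    and Z_indep: "prob_space.indep_vars M (\<lambda>_. \<mu>) Z UNIV"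
    and Z_distr: "\<And>i. distr M \<mu> (Z i) = density \<mu> (\<lambda>z. ennreal (f z \<theta>0))"
    \<comment> \<open>(i)\<close>
    and ident: "\<And>\<theta>. \<theta> \<in> \<Theta> \<Longrightarrow> \<theta> \<noteq> \<theta>0 \<Longrightarrow> \<not> (AE z in \<mu>. f z \<theta> = f z \<theta>0)"
    and theta0_in: "\<theta>0 \<in> \<Theta>"
    and compact: "compact \<Theta>"
    and cont: "AE z in density \<mu> (\<lambda>z. ennreal (f z \<theta>0)). continuous_on \<Theta> (\<lambda>\<theta>. ln (f z \<theta>))"
    and dom: "(\<integral>\<^sup>+ z. (SUP \<theta>\<in>\<Theta>. ennreal \<bar>ln (f z \<theta>)\<bar>) \<partial>(density \<mu> (\<lambda>z. ennreal (f z \<theta>0)))) < \<infinity>"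
    \<comment> \<open>(ii)\<close>
    and delta: "\<delta> > 0" "\<And>z \<theta>. z \<in> space \<mu> \<Longrightarrow> \<theta> \<in> \<Theta> \<Longrightarrow> f z \<theta> \<ge> \<delta>"
    \<comment> \<open>(iii)\<close>
    and approx: "(\<lambda>r. SUP (z, \<theta>) \<in> space \<mu> \<times> \<Theta>. ereal \<bar>ftil r z \<theta> - f z \<theta>\<bar>) \<longlonglongrightarrow> 0"
    \<comment> \<open>(iv)\<close>
    and R_mono: "mono R"
    and R_lim: "filterlim R at_top at_top"
    \<comment> \<open>\<theta>hat n is a (measurable) maximiser of the approximate log-likelihood over \<Theta>\<close>
    and thetahat_meas: "\<And>n. \<theta>hat n \<in> borel_measurable M"
    and thetahat_in: "\<And>n \<omega>. \<omega> \<in> space M \<Longrightarrow> \<theta>hat n \<omega> \<in> \<Theta>"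
    and thetahat_max: "\<And>n \<omega> \<theta>. \<omega> \<in> space M \<Longrightarrow> \<theta> \<in> \<Theta> \<Longrightarrow>
        L_tilde ftil R Z n \<omega> \<theta> \<le> L_tilde ftil R Z n \<omega> (\<theta>hat n \<omega>)"
  shows "\<forall>\<epsilon>>0. (\<lambda>n. measure M {\<omega> \<in> space M. dist (\<theta>hat n \<omega>) \<theta>0 > \<epsilon>}) \<longlonglongrightarrow> 0"
proof -
  interpret prob_space M by (rule prob)
  obtain C where "countable C" "C \<subseteq> \<Theta>" "\<Theta> \<subseteq> closure C" by (rule separable)
  then interpret iid_density_model M \<mu> \<Theta> \<theta>0 f Z C \<delta>
    by unfold_locales (use dens_meas dens_one delta Z_meas Z_indep Z_distr ident theta0_in cont dom in auto)
  show ?thesis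
    using consistency[OF compact approx R_lim thetahat_in thetahat_max] by blast
qed

end
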